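(* For every centric $s$-vector $s$ and centric $y$-vector $y$, $$W_s=\mathrm{aff}(W_s)\cap W\qquad\text{and}\qquad W_y=\mathrm{aff}(W_y)\cap W,$$ where $\mathrm{aff}$ denotes affine hull.
   Context: Let $A\in\mathbb R^{m\times n}$ have full column rank $n\le m$ and $b\in\mathbb R^m$ be such that $\{x:Ax\le b\}$ is bounded with nonempty interior. For $w\in\mathbb R^m_{++}$ the weighted center of $w$ is the unique $(x,y,s)$ with $Ax+s=b$, $s>0$, $A^\top y=0$, $\mathrm{Diag}(s)y=w$ ($s$-vector $s$, $y$-vector $y$). $W=\{w\in\mathbb R^m:w>0,\ e^\top w=1\}$. Centric $s$-/$y$-vectors are the $s$-/$y$-vectors of weighted centers of elements of $W$. For centric $s$, $W_s=\{w\in W:$ $s$-vector of $w$ is $s\}$; for centric $y$, $W_y=\{w\in W:$ $y$-vector of $w$ is $y\}$. *)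

theory Defs
  imports "HOL-Analysis.Analysis"
begin

definition polytope_set :: "real^'n^'m \<Rightarrow> real^'m \<Rightarrow> (real^'n) set" where
  "polytope_set A b = {x. \<forall>i. (A *v x) $ i \<le> b $ i}"

definition is_weighted_center ::
  "real^'n^'m \<Rightarrow> real^'m \<Rightarrow> real^'m \<Rightarrow> real^'n \<Rightarrow> real^'m \<Rightarrow> real^'m \<Rightarrow> bool" where
  "is_weighted_center A b w x y s \<longleftrightarrow>
     A *v x + s = b \<and> (\<forall>i. s $ i > 0) \<and> transpose A *v y = 0 \<and> (\<forall>i. s $ i * y $ i = w $ i)"

definition Wset :: "(real^'m) set" where
  "Wset = {w. (\<forall>i. w $ i > 0) \<and> (\<Sum>i\<in>UNIV. w $ i) = 1}"

definition s_vector_of :: "real^'n^'m \<Rightarrow> real^'m \<Rightarrow> real^'m \<Rightarrow> real^'m \<Rightarrow> bool" where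
  "s_vector_of A b w s \<longleftrightarrow> (\<exists>x y. is_weighted_center A b w x y s)"

definition y_vector_of :: "real^'n^'m \<Rightarrow> real^'m \<Rightarrow> real^'m \<Rightarrow> real^'m \<Rightarrow> bool" where
  "y_vector_of A b w y \<longleftrightarrow> (\<exists>x s. is_weighted_center A b w x y s)"

definition centric_s :: "real^'n^'m \<Rightarrow> real^'m \<Rightarrow> real^'m \<Rightarrow> bool" where
  "centric_s A b s \<longleftrightarrow> (\<exists>w\<in>Wset. s_vector_of A b w s)"

definition centric_y :: "real^'n^'m \<Rightarrow> real^'m \<Rightarrow> real^'m \<Rightarrow> bool" where
  "centric_y A b y \<longleftrightarrow> (\<exists>w\<in>Wset. y_vector_of A b w y)"

definition W_s :: "real^'n^'m \<Rightarrow> real^'m \<Rightarrow> real^'m \<Rightarrow> (real^'m) set" where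
  "W_s A b s = {w\<in>Wset. s_vector_of A b w s}"

definition W_y :: "real^'n^'m \<Rightarrow> real^'m \<Rightarrow> real^'m \<Rightarrow> (real^'m) set" where
  "W_y A b y = {w\<in>Wset. y_vector_of A b w y}"

end

theory Submission
  imports Defs
begin

text \<open>
  Both sets are cut out of the simplex \<open>W\<close> by an affine condition, and the trace of an
  affine set on \<open>W\<close> is the trace of its own affine hull.  Write \<open>*\<close> for the componentwise
  product, so that \<open>Diag(s) y = w\<close> reads \<open>s * y = w\<close>.  With \<open>s\<close> fixed, some \<open>x\<close> with
  \<open>A x + s = b\<close> exists once and for all, so \<open>w\<close> ranges over \<open>s * y\<close> with \<open>A\<^sup>T y = 0\<close>,
  a linear image of a subspace.  With \<open>y\<close> fixed (hence \<open>A\<^sup>T y = 0\<close> and \<open>y > 0\<close>),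
  \<open>w\<close> ranges over \<open>y * (b - A x)\<close>, an affine image of the whole space; positivity of \<open>w\<close>
  then forces the slack \<open>b - A x\<close> to be positive.
\<close>

lemma affine_hull_Int_eq_Int:
  assumes "affine L"
  shows "affine hull (L \<inter> W) \<inter> W = L \<inter> W"
proof -
  have "affine hull (L \<inter> W) \<subseteq> L"
    using assms by (intro hull_minimal) auto
  then show ?thesis
    using hull_subset[of "L \<inter> W" affine] by auto
qed

lemma affine_range_affine_map:
  fixes f :: "'a::real_vector \<Rightarrow> 'b::real_vector"
  assumes "linear f"
  shows "affine (range (\<lambda>x. c + f x))"
proof -
  have "subspace (range f)"
    using assms by (intro linear_subspace_image subspace_UNIV)
  then have "affine ((+) c ` range f)"
    by (simp add: subspace_imp_affine flip: affine_translation)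
  moreover have "range (\<lambda>x. c + f x) = (+) c ` range f"
    by auto
  ultimately show ?thesis
    by simp
qed

lemma is_weighted_center_iff_mult:
  "is_weighted_center A b w x y s \<longleftrightarrow>
     A *v x + s = b \<and> (\<forall>i. s $ i > 0) \<and> transpose A *v y = 0 \<and> s * y = w"
  by (simp add: is_weighted_center_def vec_eq_iff)

lemma W_s_eq_Int:
  assumes "centric_s A b s"
  shows "W_s A b s = (\<lambda>y. s * y) ` {y. transpose A *v y = 0} \<inter> Wset"
proof -
  obtain w0 x0 y0 where "is_weighted_center A b w0 x0 y0 s"
    using assms unfolding centric_s_def s_vector_of_def by blast
  then have "A *v x0 + s = b" "\<forall>i. s $ i > 0"
    by (simp_all add: is_weighted_center_iff_mult)
  then show ?thesis
    unfolding W_s_def s_vector_of_def is_weighted_center_iff_mult by blast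
qed

lemma W_y_eq_Int:
  fixes A :: "real^'n^'m" and b y :: "real^'m"
  assumes "centric_y A b y"
  shows "W_y A b y = range (\<lambda>x. y * (b - A *v x)) \<inter> Wset"
proof -
  obtain w0 x0 s0 where w0: "w0 \<in> Wset" and c: "is_weighted_center A b w0 x0 y s0"
    using assms unfolding centric_y_def y_vector_of_def by blast
  have y_ker: "transpose A *v y = 0"
    using c by (simp add: is_weighted_center_def)
  have y_pos: "y $ i > 0" for i
    using c w0 zero_less_mult_pos[of "s0 $ i" "y $ i"]
    by (auto simp: is_weighted_center_def Wset_def)
  have s_pos: "s $ i > 0" if "y * s \<in> Wset" for s :: "real^'m" and i
    using that y_pos[of i] zero_less_mult_pos[of "y $ i" "s $ i"] by (auto simp: Wset_def)
  show ?thesis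
  proof (intro set_eqI iffI)
    fix w assume "w \<in> W_y A b y"
    then obtain x s where "w \<in> Wset" "A *v x + s = b" "s * y = w"
      unfolding W_y_def y_vector_of_def is_weighted_center_iff_mult by blast
    then have "w = y * (b - A *v x)"
      by (metis add_diff_cancel_left' mult.commute)
    with \<open>w \<in> Wset\<close> show "w \<in> range (\<lambda>x. y * (b - A *v x)) \<inter> Wset"
      by blast
  next
    fix w assume "w \<in> range (\<lambda>x. y * (b - A *v x)) \<inter> Wset"
    then obtain x where "w \<in> Wset" "w = y * (b - A *v x)"
      by auto
    then have "(b - A *v x) * y = w" "\<forall>i. (b - A *v x) $ i > 0"
      using s_pos[of "b - A *v x"] by (simp_all add: mult.commute)
    with y_ker \<open>w \<in> Wset\<close> show "w \<in> W_y A b y"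
      unfolding W_y_def y_vector_of_def is_weighted_center_iff_mult by force
  qed
qed

theorem lemmaA4:
  fixes A :: "real^'n^'m" and b :: "real^'m" and s y :: "real^'m"
  assumes "rank A = CARD('n)"
    and "bounded (polytope_set A b)"
    and "interior (polytope_set A b) \<noteq> {}"
    and "centric_s A b s"
    and "centric_y A b y"
  shows "W_s A b s = affine hull (W_s A b s) \<inter> Wset
     \<and> W_y A b y = affine hull (W_y A b y) \<inter> Wset"
proof -
  have "affine ((\<lambda>v. s * v) ` {v. transpose A *v v = 0})"
    by (intro subspace_imp_affine linear_subspace_image linear_times
        linear_subspace_kernel matrix_vector_mul_linear)
  moreover have "affine (range (\<lambda>x. y * (b - A *v x)))"
    using affine_range_affine_map[of "\<lambda>x. - (y * (A *v x))" "y * b"]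
      linear_compose[OF matrix_vector_mul_linear[of A] linear_times[of y]]
    by (simp add: algebra_simps linear_compose_neg o_def)
  ultimately show ?thesis
    using affine_hull_Int_eq_Int W_s_eq_Int[OF assms(4)] W_y_eq_Int[OF assms(5)] by metis
qed

end
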